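(* For each of the following families $F_{\mathbf c,\mathbf s}:\mathbb{R}^2\to\mathbb{R}$ (real parameters $\mathbf c$, $\mathbf s=(s_1,s_2)\in\mathbb{R}^2$, any fixed choice of the signs $\pm$), with associated integer $n$: $A_n$ ($n\ge2$): $F=\pm x_1^{n+1}\pm x_2^2+c_{n-1}x_1^{n-1}+\cdots+c_3x_1^3+s_2x_1^2-s_1x_1\pm s_2x_2$; $D_n$ ($n\ge4$): $F=x_1^2x_2\pm x_2^{n-1}+c_{n-2}x_2^{n-2}+\cdots+c_2x_2^2-s_2x_2-s_1x_1$; $E_6$ ($n=6$): $F=x_1^3\pm x_2^4+c_3x_1x_2^2+c_2x_2^2+c_1x_1x_2-s_2x_2-s_1x_1$; $E_7$ ($n=7$): $F=x_1^3+x_1x_2^3+c_4x_2^4+c_3x_2^3+c_2x_2^2+c_1x_1x_2-s_2x_2-s_1x_1$; $E_8$ ($n=8$): $F=x_1^3+x_2^5+c_5x_1x_2^3+c_4x_1x_2^2+c_3x_2^3+c_2x_2^2+c_1x_1x_2-s_2x_2-s_1x_1$; the following holds: if, for given parameter values, $F_{\mathbf c,\mathbf s}$ has exactly $n$ real critical points $\mathbf x_1,\dots,\mathbf x_n$ and each is nondegenerate ($\det[\mathrm{Hess}\,F_{\mathbf c,\mathbf s}](\mathbf x_i)\ne0$), then $\sum_{i=1}^n\mathfrak M_i=0$, where $\mathfrak M_i=1/\det[\mathrm{Hess}\,F_{\mathbf c,\mathbf s}](\mathbf x_i)$.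
   Context: These are Arnold's normal forms of generating families for the $A,D,E$ classification of stable simple Lagrangian map-germs. Critical points of $F_{\mathbf c,\mathbf s}$ (gradient in $\mathbf x=(x_1,x_2)$) are the lensed images of the source $\mathbf s$, and $\mathfrak M_i$, the reciprocal of the Gaussian curvature $\det[\mathrm{Hess}\,F_{\mathbf c,\mathbf s}]$ of the graph at the critical point, is the signed magnification. The set of such $\mathbf s$ (for fixed $\mathbf c$) is the $n$-image region. *)

theory Defs
  imports "HOL-Analysis.Analysis"
begin

definition pd1 :: "(real \<times> real \<Rightarrow> real) \<Rightarrow> real \<times> real \<Rightarrow> real" where
  "pd1 F p = deriv (\<lambda>t. F (t, snd p)) (fst p)"

definition pd2 :: "(real \<times> real \<Rightarrow> real) \<Rightarrow> real \<times> real \<Rightarrow> real" where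
  "pd2 F p = deriv (\<lambda>t. F (fst p, t)) (snd p)"

definition crit_points :: "(real \<times> real \<Rightarrow> real) \<Rightarrow> (real \<times> real) set" where
  "crit_points F = {p. pd1 F p = 0 \<and> pd2 F p = 0}"

definition hess_det :: "(real \<times> real \<Rightarrow> real) \<Rightarrow> real \<times> real \<Rightarrow> real" where
  "hess_det F p = pd1 (pd1 F) p * pd2 (pd2 F) p - pd2 (pd1 F) p * pd1 (pd2 F) p"

definition magnification :: "(real \<times> real \<Rightarrow> real) \<Rightarrow> real \<times> real \<Rightarrow> real" where
  "magnification F p = 1 / hess_det F p"

text \<open>The normal forms. Signs are reals in {1,-1}; parameters c are indexed c k.\<close>

definition A_family :: "nat \<Rightarrow> real \<Rightarrow> real \<Rightarrow> real \<Rightarrow> (nat \<Rightarrow> real) \<Rightarrow> real \<Rightarrow> real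
    \<Rightarrow> real \<times> real \<Rightarrow> real" where
  "A_family n e1 e2 e3 c s1 s2 = (\<lambda>(x1, x2).
     e1 * x1 ^ (n + 1) + e2 * x2 ^ 2 + (\<Sum>k = 3..n - 1. c k * x1 ^ k)
     + s2 * x1 ^ 2 - s1 * x1 + e3 * s2 * x2)"

definition D_family :: "nat \<Rightarrow> real \<Rightarrow> (nat \<Rightarrow> real) \<Rightarrow> real \<Rightarrow> real
    \<Rightarrow> real \<times> real \<Rightarrow> real" where
  "D_family n e c s1 s2 = (\<lambda>(x1, x2).
     x1 ^ 2 * x2 + e * x2 ^ (n - 1) + (\<Sum>k = 2..n - 2. c k * x2 ^ k)
     - s2 * x2 - s1 * x1)"

definition E6_family :: "real \<Rightarrow> (nat \<Rightarrow> real) \<Rightarrow> real \<Rightarrow> real \<Rightarrow> real \<times> real \<Rightarrow> real" where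
  "E6_family e c s1 s2 = (\<lambda>(x1, x2).
     x1 ^ 3 + e * x2 ^ 4 + c 3 * x1 * x2 ^ 2 + c 2 * x2 ^ 2 + c 1 * x1 * x2
     - s2 * x2 - s1 * x1)"

definition E7_family :: "(nat \<Rightarrow> real) \<Rightarrow> real \<Rightarrow> real \<Rightarrow> real \<times> real \<Rightarrow> real" where
  "E7_family c s1 s2 = (\<lambda>(x1, x2).
     x1 ^ 3 + x1 * x2 ^ 3 + c 4 * x2 ^ 4 + c 3 * x2 ^ 3 + c 2 * x2 ^ 2 + c 1 * x1 * x2
     - s2 * x2 - s1 * x1)"

definition E8_family :: "(nat \<Rightarrow> real) \<Rightarrow> real \<Rightarrow> real \<Rightarrow> real \<times> real \<Rightarrow> real" where
  "E8_family c s1 s2 = (\<lambda>(x1, x2).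
     x1 ^ 3 + x2 ^ 5 + c 5 * x1 * x2 ^ 3 + c 4 * x1 * x2 ^ 2 + c 3 * x2 ^ 3
     + c 2 * x2 ^ 2 + c 1 * x1 * x2 - s2 * x2 - s1 * x1)"

definition ADE_family :: "(real \<times> real \<Rightarrow> real) \<Rightarrow> nat \<Rightarrow> bool" where
  "ADE_family F n \<longleftrightarrow>
     (\<exists>e1 e2 e3 c s1 s2. n \<ge> 2 \<and> e1 \<in> {1, -1} \<and> e2 \<in> {1, -1} \<and> e3 \<in> {1, -1}
        \<and> F = A_family n e1 e2 e3 c s1 s2)
   \<or> (\<exists>e c s1 s2. n \<ge> 4 \<and> e \<in> {1, -1} \<and> F = D_family n e c s1 s2)
   \<or> (\<exists>e c s1 s2. n = 6 \<and> e \<in> {1, -1} \<and> F = E6_family e c s1 s2)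
   \<or> (\<exists>c s1 s2. n = 7 \<and> F = E7_family c s1 s2)
   \<or> (\<exists>c s1 s2. n = 8 \<and> F = E8_family c s1 s2)"

end

theory Submission
  imports Defs "HOL-Computational_Algebra.Polynomial"
begin

text \<open>
  All three kinds of normal forms reduce the problem to one variable.  The key tool is
  the one-variable Euler--Jacobi identity: if a real polynomial p of degree N has N
  distinct real roots, then the sum of g(r)/p'(r) over them vanishes for every g with
  deg g \<le> N - 2.  It is proved below via Lagrange interpolation.

  For each normal form we compute the partial derivatives and the Hessian, project the
  critical points to one coordinate and express the magnification of a critical point
  as g(r)/p'(r) for suitable polynomials p and g:
  \<^item> A_n: F = P(x1) + e x2^2 + \<beta> x2, with p = P' and g = 1;
  \<^item> D_n: F = x1^2 x2 + Q(x2) - s x1, treated separately for s \<noteq> 0 and s = 0;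
  \<^item> E_6, E_7, E_8: F = x1^3 + x1 a(x2) + b(x2), where p is obtained from the elimination
    polynomial R = 3 b'^2 + a a'^2 by removing the double roots that carry two
    mirror-image critical points.
  The hypothesis that there are exactly n critical points is what makes p have as
  many distinct real roots as its degree.
\<close>

definition root_poly :: "real set \<Rightarrow> real poly" where
  "root_poly S = (\<Prod>s\<in>S. [:-s, 1:])"

lemma poly_root_poly: "poly (root_poly S) x = (\<Prod>s\<in>S. x - s)"
  by (simp add: root_poly_def poly_prod)

lemma root_poly_eq_0_iff: "finite S \<Longrightarrow> poly (root_poly S) x = 0 \<longleftrightarrow> x \<in> S"
  by (simp add: poly_root_poly)

lemma degree_root_poly: "finite S \<Longrightarrow> degree (root_poly S) = card S"
  by (simp add: root_poly_def degree_prod_eq_sum_degree)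

lemma lead_coeff_root_poly: "lead_coeff (root_poly S) = 1"
  by (simp add: root_poly_def lead_coeff_prod)

lemma root_poly_nonzero: "root_poly S \<noteq> 0"
  using lead_coeff_root_poly[of S] by auto

lemma root_poly_remove:
  "finite S \<Longrightarrow> r \<in> S \<Longrightarrow> root_poly S = [:-r, 1:] * root_poly (S - {r})"
  by (simp add: root_poly_def prod.remove)

lemma pderiv_root_poly_at:
  assumes "finite S" "r \<in> S"
  shows "poly (pderiv (root_poly S)) r = poly (root_poly (S - {r})) r"
  by (subst root_poly_remove[OF assms])
    (simp only: pderiv_mult poly_add poly_mult, simp add: pderiv_pCons)

lemma root_poly_dvd:
  assumes "finite S" "\<forall>r\<in>S. poly p r = 0"
  shows "root_poly S dvd p"
  using assms
proof (induction S arbitrary: p rule: finite_induct)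
  case empty
  then show ?case by (simp add: root_poly_def)
next
  case (insert r S)
  then have "poly p r = 0" by simp
  then obtain q where p: "p = [:-r, 1:] * q"
    by (auto simp: poly_eq_0_iff_dvd dvd_def)
  have "poly q s = 0" if "s \<in> S" for s
    using insert that by (auto simp: p)
  then have "root_poly S dvd q" using insert.IH by blast
  then have "[:-r, 1:] * root_poly S dvd p"
    unfolding p by (rule mult_dvd_mono[OF dvd_refl])
  then show ?case
    using insert.hyps by (simp add: root_poly_def)
qed

lemma root_poly_factorisation:
  assumes "finite S" "card S = degree p" "\<forall>r\<in>S. poly p r = 0"
  shows "p = smult (lead_coeff p) (root_poly S)"
proof (cases "p = 0")
  case False
  obtain q where p: "p = root_poly S * q"
    using root_poly_dvd[OF assms(1,3)] by (auto simp: dvd_def)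
  with False have "q \<noteq> 0" by auto
  then have "degree q = 0"
    using assms(1,2) by (simp add: p degree_mult_eq root_poly_nonzero degree_root_poly)
  then obtain l where "q = [:l:]" by (rule degree_eq_zeroE)
  then show ?thesis
    by (simp add: p lead_coeff_mult lead_coeff_root_poly)
qed simp

lemma poly_vanishing_on_large_set:
  fixes p :: "real poly"
  assumes "finite S" "degree p < card S" "\<forall>x\<in>S. poly p x = 0"
  shows "p = 0"
proof (rule ccontr)
  assume "p \<noteq> 0"
  then have "card S \<le> card {x. poly p x = 0}"
    using assms(3) by (intro card_mono[OF poly_roots_finite]) auto
  also have "\<dots> \<le> degree p"
    using \<open>p \<noteq> 0\<close> by (rule card_poly_roots_bound)
  finally show False using assms(2) by simp
qed

lemma lagrange_interpolation:
  fixes g :: "real poly"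
  assumes S: "finite S" and deg: "degree g < card S"
  shows "g = (\<Sum>r\<in>S. smult (poly g r / poly (root_poly (S - {r})) r) (root_poly (S - {r})))"
    (is "g = ?L")
proof -
  have "poly ?L t = poly g t" if t: "t \<in> S" for t
  proof -
    have "poly ?L t = (\<Sum>r\<in>S. poly g r / poly (root_poly (S - {r})) r * poly (root_poly (S - {r})) t)"
      by (simp add: poly_sum)
    also have "\<dots> = poly g t / poly (root_poly (S - {t})) t * poly (root_poly (S - {t})) t"
      by (rule sum.remove[OF S t, THEN trans], subst sum.neutral)
        (use S t in \<open>auto simp: root_poly_eq_0_iff\<close>)
    also have "\<dots> = poly g t"
      using S by (simp add: root_poly_eq_0_iff)
    finally show ?thesis .
  qed
  moreover have "degree ?L < card S"
  proof -
    have "degree ?L \<le> card S - 1"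
      by (rule degree_sum_le)
        (use S in \<open>auto intro: order.trans[OF degree_smult_le] simp: degree_root_poly\<close>)
    then show ?thesis using deg by linarith
  qed
  ultimately have "?L - g = 0"
    using deg by (intro poly_vanishing_on_large_set[OF S])
      (auto intro: le_less_trans[OF degree_diff_le_max])
  then show ?thesis by simp
qed

text \<open>The one-variable Euler--Jacobi identity: if p has degree N and N distinct real
  roots, then the sum of g(r)/p'(r) over the roots vanishes whenever deg g \<le> N - 2.
  Comparing coefficients of x^(N-1) in the Lagrange interpolation of g gives the claim.\<close>

lemma euler_jacobi_1d:
  fixes p g :: "real poly"
  assumes S: "finite S" and card: "card S = degree p" and roots: "\<forall>r\<in>S. poly p r = 0"
    and deg: "g = 0 \<or> degree g + 2 \<le> degree p"
  shows "(\<Sum>r\<in>S. poly g r / poly (pderiv p) r) = 0"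
proof (cases "g = 0")
  case False
  with deg card have deg_g: "degree g + 2 \<le> card S" by simp
  define w where "w r = poly (root_poly (S - {r})) r" for r
  have "p = smult (lead_coeff p) (root_poly S)"
    by (rule root_poly_factorisation[OF S card roots])
  then have "pderiv p = smult (lead_coeff p) (pderiv (root_poly S))"
    by (metis pderiv_smult)
  then have p': "poly (pderiv p) r = lead_coeff p * w r" if "r \<in> S" for r
    by (simp add: pderiv_root_poly_at[OF S that] w_def)
  have "coeff g (card S - 1) = (\<Sum>r\<in>S. poly g r / w r * coeff (root_poly (S - {r})) (card S - 1))"
    by (subst lagrange_interpolation[OF S]) (use deg_g in \<open>simp_all add: coeff_sum w_def\<close>)
  also have "\<dots> = (\<Sum>r\<in>S. poly g r / w r)"
  proof (intro sum.cong refl)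
    fix r assume "r \<in> S"
    then have "degree (root_poly (S - {r})) = card S - 1"
      using S by (simp add: degree_root_poly)
    then show "poly g r / w r * coeff (root_poly (S - {r})) (card S - 1) = poly g r / w r"
      using lead_coeff_root_poly[of "S - {r}"] by simp
  qed
  finally have "(\<Sum>r\<in>S. poly g r / w r) = 0"
    using deg_g by (simp add: coeff_eq_0)
  moreover have "(\<Sum>r\<in>S. poly g r / poly (pderiv p) r) = (\<Sum>r\<in>S. poly g r / w r) / lead_coeff p"
    by (simp add: p' sum_divide_distrib mult.commute)
  ultimately show ?thesis by simp
qed simp

lemma pd1_eqI:
  assumes "\<And>x1 x2. ((\<lambda>t. F (t, x2)) has_real_derivative G (x1, x2)) (at x1)"
  shows "pd1 F = G"
  using assms by (auto simp: pd1_def fun_eq_iff intro: DERIV_imp_deriv)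

lemma pd2_eqI:
  assumes "\<And>x1 x2. ((\<lambda>t. F (x1, t)) has_real_derivative G (x1, x2)) (at x2)"
  shows "pd2 F = G"
  using assms by (auto simp: pd2_def fun_eq_iff intro: DERIV_imp_deriv)

lemmas poly_DERIV_chain = poly_DERIV[THEN DERIV_chain2]

text \<open>The A_n normal forms are separable: the critical points are the points
  (u, v0) with P'(u) = 0, and the Hessian determinant there is 2e P''(u).  Having
  deg P' critical points means that P' has deg P' distinct real roots, so
  Euler--Jacobi with g = 1 applies.\<close>

lemma separable_form_sum_zero:
  fixes P :: "real poly" and e \<beta> :: real
  assumes F: "F = (\<lambda>(x1, x2). poly P x1 + e * x2^2 + \<beta> * x2)" and e: "e \<noteq> 0"
    and deg: "degree (pderiv P) \<ge> 2"
    and fin: "finite (crit_points F)" and card: "card (crit_points F) = degree (pderiv P)"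
  shows "(\<Sum>p\<in>crit_points F. magnification F p) = 0"
proof -
  have F1: "pd1 F = (\<lambda>(x1, x2). poly (pderiv P) x1)"
    unfolding F by (rule pd1_eqI) (auto intro!: derivative_eq_intros poly_DERIV_chain)
  have F2: "pd2 F = (\<lambda>(x1, x2). 2 * e * x2 + \<beta>)"
    unfolding F by (rule pd2_eqI) (auto intro!: derivative_eq_intros)
  have hess: "hess_det F (u, v) = 2 * e * poly (pderiv (pderiv P)) u" for u v
  proof -
    have "pd1 (pd1 F) = (\<lambda>(x1, x2). poly (pderiv (pderiv P)) x1)"
      unfolding F1 by (rule pd1_eqI) (auto intro!: derivative_eq_intros poly_DERIV_chain)
    moreover have "pd2 (pd2 F) = (\<lambda>_. 2 * e)"
      unfolding F2 by (rule pd2_eqI) (auto intro!: derivative_eq_intros)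
    moreover have "pd2 (pd1 F) = (\<lambda>_. 0)"
      unfolding F1 by (rule pd2_eqI) auto
    ultimately show ?thesis by (simp add: hess_det_def)
  qed
  define v0 where "v0 = - \<beta> / (2 * e)"
  define U where "U = {u. poly (pderiv P) u = 0}"
  have crit: "crit_points F = (\<lambda>u. (u, v0)) ` U"
    using e by (auto simp: crit_points_def F1 F2 U_def v0_def field_simps)
  have inj: "inj_on (\<lambda>u. (u, v0)) U" by (rule inj_onI) simp
  have "finite U" and "card U = degree (pderiv P)"
    using fin card finite_image_iff[OF inj] card_image[OF inj] by (simp_all add: crit)
  then have "(\<Sum>u\<in>U. poly 1 u / poly (pderiv (pderiv P)) u) = 0"
    using deg by (intro euler_jacobi_1d) (auto simp: U_def)
  moreover have "(\<Sum>p\<in>crit_points F. magnification F p)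
      = (\<Sum>u\<in>U. poly 1 u / poly (pderiv (pderiv P)) u) / (2 * e)"
    by (simp add: crit sum.reindex[OF inj] magnification_def hess sum_divide_distrib mult.commute)
  ultimately show ?thesis by simp
qed

locale D_form =
  fixes Q :: "real poly" and s :: real and F :: "real \<times> real \<Rightarrow> real"
  assumes F_eq: "F = (\<lambda>(x1, x2). x1^2 * x2 + poly Q x2 - s * x1)"
begin

lemma pd1_F: "pd1 F = (\<lambda>(x1, x2). 2 * x1 * x2 - s)"
  unfolding F_eq by (rule pd1_eqI) (auto intro!: derivative_eq_intros)

lemma pd2_F: "pd2 F = (\<lambda>(x1, x2). x1^2 + poly (pderiv Q) x2)"
  unfolding F_eq by (rule pd2_eqI) (auto intro!: derivative_eq_intros poly_DERIV_chain)

lemma crit_iff: "(u, v) \<in> crit_points F \<longleftrightarrow> 2 * u * v = s \<and> u^2 + poly (pderiv Q) v = 0"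
  by (simp add: crit_points_def pd1_F pd2_F)

lemma hess: "hess_det F (u, v) = 2 * v * poly (pderiv (pderiv Q)) v - 4 * u^2"
proof -
  have "pd1 (pd1 F) = (\<lambda>(x1, x2). 2 * x2)"
    unfolding pd1_F by (rule pd1_eqI) (auto intro!: derivative_eq_intros)
  moreover have "pd2 (pd2 F) = (\<lambda>(x1, x2). poly (pderiv (pderiv Q)) x2)"
    unfolding pd2_F by (rule pd2_eqI) (auto intro!: derivative_eq_intros poly_DERIV_chain)
  moreover have "pd2 (pd1 F) = (\<lambda>(x1, x2). 2 * x1)"
    unfolding pd1_F by (rule pd2_eqI) (auto intro!: derivative_eq_intros)
  moreover have "pd1 (pd2 F) = (\<lambda>(x1, x2). 2 * x1)"
    unfolding pd2_F by (rule pd1_eqI) (auto intro!: derivative_eq_intros)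
  ultimately show ?thesis by (simp add: hess_det_def power2_eq_square)
qed

text \<open>For s \<noteq> 0 every critical point has v \<noteq> 0 and u = s/(2v), so the critical points
  are determined by their second coordinates, which are the roots of
  P(v) = s^2 + 4 v^2 Q'(v).  Since P'(v) = 2v \<cdot> hess_det F (u, v), Euler--Jacobi with
  g = 2x gives the claim.\<close>

lemma sum_zero_off_axis:
  assumes s: "s \<noteq> 0" and degQ: "degree Q \<ge> 3"
    and fin: "finite (crit_points F)" and card: "card (crit_points F) = degree Q + 1"
  shows "(\<Sum>p\<in>crit_points F. magnification F p) = 0"
proof -
  define C where "C = crit_points F"
  define P where "P = [:s^2:] + smult 4 ([:0, 0, 1:] * pderiv Q)"
  have v_nonzero: "v \<noteq> 0" if "(u, v) \<in> C" for u v
    using that s by (auto simp: C_def crit_iff)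
  have crit_eqs: "s = 2 * u * v" "poly (pderiv Q) v = - (u^2)" if "(u, v) \<in> C" for u v
    using that by (auto simp: C_def crit_iff)
  have P_root: "poly P v = 0" if "(u, v) \<in> C" for u v
    using crit_eqs[OF that] by (simp add: P_def algebra_simps power2_eq_square)
  have P': "poly (pderiv P) v = 2 * v * hess_det F (u, v)" if "(u, v) \<in> C" for u v
    using crit_eqs[OF that] by (simp add: P_def hess pderiv_add pderiv_smult pderiv_mult
        pderiv_pCons algebra_simps power2_eq_square)
  have inj: "inj_on snd C"
  proof (rule inj_onI)
    fix p q assume "p \<in> C" "q \<in> C" "snd p = snd q"
    then obtain u u' v where "(u, v) \<in> C" "(u', v) \<in> C" "p = (u, v)" "q = (u', v)"
      by (metis prod.collapse)
    moreover from this have "2 * u * v = 2 * u' * v" "v \<noteq> 0"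
      using crit_eqs(1) v_nonzero by metis+
    ultimately show "p = q" by simp
  qed
  have "degree (pderiv Q) = degree Q - 1" by (rule degree_pderiv)
  then have degP: "degree P = degree Q + 1"
    using degQ unfolding P_def
    by (subst degree_add_eq_right) (auto simp: degree_mult_eq)
  have "(\<Sum>v\<in>snd ` C. poly [:0, 2:] v / poly (pderiv P) v) = 0"
    using fin card degP degQ P_root card_image[OF inj]
    by (intro euler_jacobi_1d) (auto simp: C_def)
  moreover have "magnification F p = poly [:0, 2:] (snd p) / poly (pderiv P) (snd p)" if "p \<in> C" for p
    using that v_nonzero P' by (cases p) (simp add: magnification_def)
  ultimately have "(\<Sum>p\<in>C. magnification F p) = 0"
    by (simp add: sum.reindex[OF inj])
  then show ?thesis by (simp add: C_def)
qed

lemma off_axis_point: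
  assumes s: "s = 0" and p: "p \<in> crit_points F" "fst p \<noteq> 0"
  defines "w \<equiv> sqrt (- poly (pderiv Q) 0)"
  shows "p = (w, 0) \<or> p = (-w, 0)"
proof -
  obtain u v where uv: "p = (u, v)" "u \<noteq> 0" "2 * u * v = 0" "u^2 = - poly (pderiv Q) v"
    using p s by (cases p) (auto simp: crit_iff)
  then have "v = 0" by simp
  with uv have "- poly (pderiv Q) 0 = u^2" by simp
  then have "w^2 = u^2" by (simp add: w_def)
  then have "u = w \<or> u = -w" by (auto simp: power2_eq_iff)
  with uv \<open>v = 0\<close> show ?thesis by auto
qed

text \<open>For s = 0 the critical points are the points (0, v) with Q'(v) = 0 together with
  at most two points (\<plusminus>w, 0).  Counting shows that all deg Q - 1 roots of Q' are
  real and simple and that both points (\<plusminus>w, 0) occur; nondegeneracy excludes Q'(0) = 0.\<close>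

lemma on_axis_structure:
  assumes s: "s = 0" and degQ: "degree Q \<ge> 3"
    and fin: "finite (crit_points F)" and card: "card (crit_points F) = degree Q + 1"
    and nd: "\<forall>p\<in>crit_points F. hess_det F p \<noteq> 0"
  defines "V \<equiv> {v. poly (pderiv Q) v = 0}"
  obtains w where "w \<noteq> 0" "w^2 = - poly (pderiv Q) 0" "0 \<notin> V" "card V = degree Q - 1"
    "crit_points F = (\<lambda>v. (0, v)) ` V \<union> {(w, 0), (-w, 0)}"
proof -
  define C where "C = crit_points F"
  define W where "W = {p\<in>C. fst p \<noteq> 0}"
  define w where "w = sqrt (- poly (pderiv Q) 0)"
  have degQ': "degree (pderiv Q) = degree Q - 1" by (rule degree_pderiv)
  then have "pderiv Q \<noteq> 0" using degQ by auto
  then have finV: "finite V" and card_V_le: "card V \<le> degree Q - 1"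
    using poly_roots_finite card_poly_roots_bound[of "pderiv Q"] degQ' by (simp_all add: V_def)
  have axis: "(0, v) \<in> C \<longleftrightarrow> v \<in> V" for v
    using s by (simp add: C_def crit_iff V_def)
  have "0 \<notin> V"
    using nd axis[of 0] by (auto simp: C_def hess)
  have W_sub: "W \<subseteq> {(w, 0), (-w, 0)}"
    using off_axis_point[OF s] by (auto simp: W_def C_def w_def)
  have C_split: "C = (\<lambda>v. (0, v)) ` V \<union> W"
    using axis by (auto simp: W_def)
  have inj: "inj_on (\<lambda>v. (0::real, v)) V" by (rule inj_onI) simp
  have card_C: "card C = card V + card W"
    unfolding C_split using finV fin card_image[OF inj]
    by (subst card_Un_disjoint) (auto simp: W_def C_def)
  have two: "card {(w, 0), (-w, 0::real)} \<le> 2"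
    by (simp add: card_insert_if)
  then have "card W \<le> 2"
    using card_mono[OF _ W_sub] by simp
  then have card_V: "card V = degree Q - 1" and card_W: "card W = 2"
    using card_C card card_V_le degQ by (simp_all add: C_def)
  then have W: "W = {(w, 0), (-w, 0)}"
    using card_seteq[OF _ W_sub] two by simp
  show ?thesis
  proof (rule that)
    show "w \<noteq> 0"
      using card_W W by (auto simp: card_insert_if split: if_splits)
    have "(w, 0) \<in> C" using W by (auto simp: W_def)
    then show "w^2 = - poly (pderiv Q) 0"
      using s by (simp add: C_def crit_iff)
  qed (use \<open>0 \<notin> V\<close> card_V C_split W in \<open>simp_all add: C_def\<close>)
qed

text \<open>For s = 0 the magnification sum is half the Euler--Jacobi sum of 1/T' over
  the roots of T(x) = x Q'(x).\<close>

lemma sum_zero_on_axis: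
  assumes s: "s = 0" and degQ: "degree Q \<ge> 3"
    and fin: "finite (crit_points F)" and card: "card (crit_points F) = degree Q + 1"
    and nd: "\<forall>p\<in>crit_points F. hess_det F p \<noteq> 0"
  shows "(\<Sum>p\<in>crit_points F. magnification F p) = 0"
proof -
  define V where "V = {v. poly (pderiv Q) v = 0}"
  obtain w where w: "w \<noteq> 0" "w^2 = - poly (pderiv Q) 0" and "0 \<notin> V" "card V = degree Q - 1"
    and C: "crit_points F = (\<lambda>v. (0, v)) ` V \<union> {(w, 0), (-w, 0)}"
    using on_axis_structure[OF assms] unfolding V_def by blast
  define T where "T = [:0, 1:] * pderiv Q"
  have finV: "finite V" using fin C finite_imageD[of "\<lambda>v. (0::real, v)" V] by (auto intro: inj_onI)
  have T': "poly (pderiv T) r = poly (pderiv Q) r + r * poly (pderiv (pderiv Q)) r" for r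
    by (simp add: T_def pderiv_mult pderiv_pCons)
  have "degree (pderiv Q) = degree Q - 1" by (rule degree_pderiv)
  then have "degree T = degree Q" using degQ by (auto simp: T_def degree_mult_eq)
  then have "(\<Sum>r\<in>insert 0 V. poly 1 r / poly (pderiv T) r) = 0"
    using finV \<open>0 \<notin> V\<close> \<open>card V = degree Q - 1\<close> degQ
    by (intro euler_jacobi_1d) (auto simp: T_def V_def)
  then have EJ: "1 / poly (pderiv Q) 0 + (\<Sum>v\<in>V. 1 / (v * poly (pderiv (pderiv Q)) v)) = 0"
    using finV \<open>0 \<notin> V\<close> by (simp add: T' V_def)
  have "(\<Sum>p\<in>crit_points F. magnification F p)
      = (\<Sum>v\<in>V. 1 / (2 * v * poly (pderiv (pderiv Q)) v)) + 1 / (2 * poly (pderiv Q) 0)"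
    using finV w \<open>0 \<notin> V\<close> unfolding C
    by (subst sum.union_disjoint) (auto simp: sum.reindex inj_on_def magnification_def hess field_simps)
  also have "\<dots> = (1 / poly (pderiv Q) 0 + (\<Sum>v\<in>V. 1 / (v * poly (pderiv (pderiv Q)) v))) / 2"
    by (simp add: add_divide_distrib sum_divide_distrib ac_simps)
  finally show ?thesis using EJ by simp
qed

theorem sum_zero:
  assumes "degree Q \<ge> 3" "finite (crit_points F)" "card (crit_points F) = degree Q + 1"
    and "\<forall>p\<in>crit_points F. hess_det F p \<noteq> 0"
  shows "(\<Sum>p\<in>crit_points F. magnification F p) = 0"
  using assms sum_zero_off_axis sum_zero_on_axis by (cases "s = 0") auto

end

locale E_form =
  fixes a b :: "real poly" and F :: "real \<times> real \<Rightarrow> real"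
  assumes F_eq: "F = (\<lambda>(x1, x2). x1^3 + x1 * poly a x2 + poly b x2)"
begin

lemma pd1_F: "pd1 F = (\<lambda>(x1, x2). 3 * x1^2 + poly a x2)"
  unfolding F_eq by (rule pd1_eqI) (auto intro!: derivative_eq_intros)

lemma pd2_F: "pd2 F = (\<lambda>(x1, x2). x1 * poly (pderiv a) x2 + poly (pderiv b) x2)"
  unfolding F_eq by (rule pd2_eqI) (auto intro!: derivative_eq_intros poly_DERIV_chain)

lemma crit_iff:
  "(u, v) \<in> crit_points F \<longleftrightarrow> 3 * u^2 + poly a v = 0 \<and> u * poly (pderiv a) v + poly (pderiv b) v = 0"
  by (simp add: crit_points_def pd1_F pd2_F)

lemma hess: "hess_det F (u, v) =
    6 * u * (u * poly (pderiv (pderiv a)) v + poly (pderiv (pderiv b)) v) - (poly (pderiv a) v)^2"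
proof -
  have "pd1 (pd1 F) = (\<lambda>(x1, x2). 6 * x1)"
    unfolding pd1_F by (rule pd1_eqI) (auto intro!: derivative_eq_intros)
  moreover have "pd2 (pd2 F) =
      (\<lambda>(x1, x2). x1 * poly (pderiv (pderiv a)) x2 + poly (pderiv (pderiv b)) x2)"
    unfolding pd2_F by (rule pd2_eqI) (auto intro!: derivative_eq_intros poly_DERIV_chain)
  moreover have "pd2 (pd1 F) = (\<lambda>(x1, x2). poly (pderiv a) x2)"
    unfolding pd1_F by (rule pd2_eqI) (auto intro!: derivative_eq_intros poly_DERIV_chain)
  moreover have "pd1 (pd2 F) = (\<lambda>(x1, x2). poly (pderiv a) x2)"
    unfolding pd2_F by (rule pd1_eqI) (auto intro!: derivative_eq_intros)
  ultimately show ?thesis by (simp add: hess_det_def power2_eq_square)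
qed

text \<open>Eliminating x1 from the critical point equations 3 x1^2 = -a(x2) and
  x1 a'(x2) = -b'(x2): the second coordinate of every critical point is a root of R.\<close>

definition R :: "real poly" where
  "R = smult 3 (pderiv b * pderiv b) + a * pderiv a * pderiv a"

lemma R_root: "(u, v) \<in> crit_points F \<Longrightarrow> poly R v = 0"
proof -
  assume "(u, v) \<in> crit_points F"
  then have "poly (pderiv b) v = - u * poly (pderiv a) v" "poly a v = - 3 * u^2"
    by (auto simp: crit_iff)
  then show ?thesis by (simp add: R_def algebra_simps power2_eq_square)
qed

lemma poly_pderiv_R: "poly (pderiv R) v = 6 * poly (pderiv b) v * poly (pderiv (pderiv b)) v
    + poly (pderiv a) v ^ 3 + 2 * poly a v * poly (pderiv a) v * poly (pderiv (pderiv a)) v"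
  by (simp add: R_def pderiv_add pderiv_mult pderiv_smult algebra_simps power3_eq_cube)

lemma poly_pderiv2_R:
  assumes "poly (pderiv a) v = 0" "poly (pderiv b) v = 0"
  shows "poly (pderiv (pderiv R)) v
    = 6 * poly (pderiv (pderiv b)) v ^ 2 + 2 * poly a v * poly (pderiv (pderiv a)) v ^ 2"
  using assms by (simp add: R_def pderiv_add pderiv_mult pderiv_smult algebra_simps power2_eq_square)

definition fibre :: "real \<Rightarrow> (real \<times> real) set" where
  "fibre r = {p \<in> crit_points F. snd p = r}"

lemma fibre_cases: "p \<in> fibre r \<longleftrightarrow> (\<exists>u. p = (u, r) \<and> (u, r) \<in> crit_points F)"
  by (cases p) (auto simp: fibre_def)

lemma regular_fibre:
  assumes ur: "(u, r) \<in> crit_points F" and a'r: "poly (pderiv a) r \<noteq> 0"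
  shows "fibre r = {(u, r)}"
proof -
  have "u' = u" if "(u', r) \<in> crit_points F" for u'
  proof -
    have "u' * poly (pderiv a) r + poly (pderiv b) r = 0" "u * poly (pderiv a) r + poly (pderiv b) r = 0"
      using that ur by (simp_all add: crit_iff)
    then have "u' * poly (pderiv a) r = u * poly (pderiv a) r" by linarith
    then show ?thesis using a'r by simp
  qed
  then have "fibre r \<subseteq> {(u, r)}" by (force simp: fibre_cases)
  then show ?thesis using ur by (auto simp: fibre_cases)
qed

lemma folded_fibre:
  assumes ur: "(u, r) \<in> crit_points F" and a'r: "poly (pderiv a) r = 0"
    and nd: "hess_det F (u, r) \<noteq> 0"
  shows "poly (pderiv b) r = 0" and "u \<noteq> 0" and "fibre r = {(u, r), (-u, r)}"
proof -
  have au: "3 * u^2 + poly a r = 0" "u * poly (pderiv a) r + poly (pderiv b) r = 0"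
    using ur by (simp_all add: crit_iff)
  then show b'r: "poly (pderiv b) r = 0" using a'r by simp
  show "u \<noteq> 0" using nd a'r by (auto simp: hess)
  have "u' = u \<or> u' = -u" if "(u', r) \<in> crit_points F" for u'
  proof -
    have "u'^2 = u^2" using that au by (simp add: crit_iff)
    then show ?thesis by (simp add: power2_eq_iff)
  qed
  then have "fibre r \<subseteq> {(u, r), (-u, r)}" by (force simp: fibre_cases)
  moreover have "(-u, r) \<in> crit_points F"
    using au a'r b'r by (simp add: crit_iff)
  ultimately show "fibre r = {(u, r), (-u, r)}"
    using ur by (auto simp: fibre_cases)
qed

end

text \<open>Y is the set of
  second coordinates of critical points and Z \<subseteq> Y the set of folded ones (those
  carrying two critical points).  Dividing out the double roots Z of R gives T, and
  g is the corresponding quotient of a'.\<close>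

locale E_form_nondegenerate = E_form +
  assumes finite_crit: "finite (crit_points F)"
    and nondegenerate: "\<forall>p\<in>crit_points F. hess_det F p \<noteq> 0"
begin

definition Y :: "real set" where
  "Y = snd ` crit_points F"

definition Z :: "real set" where
  "Z = {r \<in> Y. poly (pderiv a) r = 0}"

definition T :: "real poly" where
  "T = R div root_poly Z"

definition g :: "real poly" where
  "g = pderiv a div root_poly Z"

lemma Y_point: "r \<in> Y \<Longrightarrow> \<exists>u. (u, r) \<in> crit_points F"
  by (auto simp: Y_def image_iff)

lemma finite_Y: "finite Y" and finite_Z: "finite Z"
  using finite_crit by (simp_all add: Y_def Z_def)

lemma folded_b': "r \<in> Z \<Longrightarrow> poly (pderiv b) r = 0"
  using Y_point folded_fibre(1) nondegenerate by (force simp: Z_def)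

lemma factor_a': "pderiv a = root_poly Z * g"
proof -
  have "root_poly Z dvd pderiv a"
    by (rule root_poly_dvd[OF finite_Z]) (simp add: Z_def)
  then show ?thesis by (simp add: g_def)
qed

lemma factor_R: "R = root_poly Z * T"
proof -
  have "root_poly Z dvd pderiv b"
    by (rule root_poly_dvd[OF finite_Z]) (simp add: folded_b')
  then have "root_poly Z dvd R"
    using factor_a' by (auto simp: R_def intro!: dvd_add dvd_smult)
  then show ?thesis by (simp add: T_def)
qed

lemma sum_over_fibres: "(\<Sum>p\<in>crit_points F. f p) = (\<Sum>r\<in>Y. \<Sum>p\<in>fibre r. f p)"
  unfolding Y_def fibre_def by (rule sum.image_gen[OF finite_crit])

lemma card_fibre: "r \<in> Y \<Longrightarrow> card (fibre r) = (if r \<in> Z then 2 else 1)"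
proof -
  assume r: "r \<in> Y"
  then obtain u where u: "(u, r) \<in> crit_points F" using Y_point by blast
  show ?thesis
  proof (cases "poly (pderiv a) r = 0")
    case True
    then show ?thesis
      using r u folded_fibre[OF u True] nondegenerate by (simp add: Z_def)
  next
    case False
    then show ?thesis using regular_fibre[OF u False] by (simp add: Z_def)
  qed
qed

text \<open>Each regular fibre contains one, each folded fibre two critical points.\<close>

lemma card_crit: "card (crit_points F) = card Y + card Z"
proof -
  have "card (crit_points F) = (\<Sum>r\<in>Y. card (fibre r))"
    using sum_over_fibres[of "\<lambda>_. 1::nat"] by simp
  also have "\<dots> = (\<Sum>r\<in>Y. 1 + (if r \<in> Z then 1 else 0))"
    by (intro sum.cong) (auto simp: card_fibre)
  also have "\<dots> = card Y + (\<Sum>r\<in>Y. if r \<in> Z then 1 else 0)"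
    by (subst sum.distrib) simp
  also have "(\<Sum>r\<in>Y. if r \<in> Z then 1 else 0) = card {r \<in> Y. r \<in> Z}"
    using sum.inter_filter[OF finite_Y, of "\<lambda>_. 1::nat"] by simp
  finally show ?thesis by (simp add: Z_def)
qed

lemma pderiv_root_poly_Z: "r \<in> Z \<Longrightarrow> poly (pderiv (root_poly Z)) r \<noteq> 0"
  using finite_Z by (simp add: pderiv_root_poly_at root_poly_eq_0_iff)

text \<open>Every point of Y is a root of T: for r \<notin> Z since R(r) = 0, for r \<in> Z since R has a
  double root there while root_poly Z only a simple one.\<close>

lemma T_root: "r \<in> Y \<Longrightarrow> poly T r = 0"
proof -
  assume r: "r \<in> Y"
  then obtain u where u: "(u, r) \<in> crit_points F" using Y_point by blast
  show ?thesis
  proof (cases "r \<in> Z")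
    case False
    then have "poly (root_poly Z) r \<noteq> 0" using finite_Z by (simp add: root_poly_eq_0_iff)
    with R_root[OF u] show ?thesis by (simp add: factor_R)
  next
    case True
    then have "poly (pderiv R) r = 0"
      using folded_b' by (simp add: poly_pderiv_R Z_def)
    moreover have "poly (root_poly Z) r = 0" using True finite_Z by (simp add: root_poly_eq_0_iff)
    ultimately show ?thesis
      using pderiv_root_poly_Z[OF True] by (simp add: factor_R pderiv_mult)
  qed
qed

text \<open>On a regular fibre, R'(r) = -a'(r) \<cdot> hess_det F (u, r); dividing by root_poly Z
  expresses the magnification through g and T'.\<close>

lemma regular_fibre_sum:
  assumes r: "r \<in> Y" "r \<notin> Z"
  shows "(\<Sum>p\<in>fibre r. magnification F p) = - (poly g r / poly (pderiv T) r)"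
proof -
  obtain u where u: "(u, r) \<in> crit_points F" using Y_point r(1) by blast
  have a'r: "poly (pderiv a) r \<noteq> 0" using r by (simp add: Z_def)
  have Dr: "poly (root_poly Z) r \<noteq> 0" using r(2) finite_Z by (simp add: root_poly_eq_0_iff)
  define h where "h = hess_det F (u, r)"
  have h: "h \<noteq> 0" using nondegenerate u by (simp add: h_def)
  have "poly (pderiv b) r = - u * poly (pderiv a) r" "poly a r = - 3 * u^2"
    using u by (auto simp: crit_iff)
  then have "poly (pderiv R) r = - poly (pderiv a) r * h"
    by (simp add: poly_pderiv_R h_def hess algebra_simps power2_eq_square power3_eq_cube)
  moreover have "poly (pderiv R) r = poly (root_poly Z) r * poly (pderiv T) r"
    using T_root[OF r(1)] by (simp add: factor_R pderiv_mult)
  moreover have "poly (pderiv a) r = poly (root_poly Z) r * poly g r"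
    by (simp add: factor_a')
  ultimately have "poly (root_poly Z) r * poly (pderiv T) r = poly (root_poly Z) r * (- poly g r * h)"
    by simp
  then have T'r: "poly (pderiv T) r = - poly g r * h"
    using Dr mult_left_cancel by blast
  have "poly g r \<noteq> 0" using a'r by (simp add: factor_a')
  then show ?thesis
    using h by (simp add: regular_fibre[OF u a'r] magnification_def h_def[symmetric] T'r)
qed

text \<open>On a folded fibre, the two Hessian determinants h1, h2 at (\<plusminus>u, r) satisfy
  h1 + h2 = 12 u^2 a''(r) and h1 h2 = -6 u^2 R''(r); both are again expressed
  through g and T'.\<close>

lemma folded_fibre_sum:
  assumes r: "r \<in> Z"
  shows "(\<Sum>p\<in>fibre r. magnification F p) = - (poly g r / poly (pderiv T) r)"
proof -
  have rY: "r \<in> Y" and a'r: "poly (pderiv a) r = 0" using r by (simp_all add: Z_def)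
  obtain u where u: "(u, r) \<in> crit_points F" using Y_point rY by blast
  have b'r: "poly (pderiv b) r = 0" and u0: "u \<noteq> 0" and fib: "fibre r = {(u, r), (-u, r)}"
    using folded_fibre[OF u a'r] u nondegenerate by auto
  have ar: "poly a r = - 3 * u^2" using u by (auto simp: crit_iff)
  define h1 where "h1 = hess_det F (u, r)"
  define h2 where "h2 = hess_det F (-u, r)"
  have h: "h1 \<noteq> 0" "h2 \<noteq> 0"
    using nondegenerate u fib by (auto simp: h1_def h2_def fibre_def)
  have R'': "poly (pderiv (pderiv R)) r = 2 * poly (pderiv (root_poly Z)) r * poly (pderiv T) r"
    and a'': "poly (pderiv (pderiv a)) r = poly (pderiv (root_poly Z)) r * poly g r"
    using T_root[OF rY] r finite_Z
    by (simp_all add: factor_R factor_a' pderiv_mult pderiv_add root_poly_eq_0_iff)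
  have prod: "h1 * h2 = - 6 * u^2 * poly (pderiv (pderiv R)) r"
    by (simp add: h1_def h2_def hess a'r poly_pderiv2_R[OF a'r b'r] ar algebra_simps power2_eq_square)
  have sum: "h1 + h2 = 12 * u^2 * poly (pderiv (pderiv a)) r"
    by (simp add: h1_def h2_def hess a'r algebra_simps power2_eq_square)
  have "poly (pderiv T) r \<noteq> 0" using prod h u0 R'' by auto
  moreover have "(\<Sum>p\<in>fibre r. magnification F p) = (h1 + h2) / (h1 * h2)"
    using u0 h by (simp add: fib magnification_def h1_def[symmetric] h2_def[symmetric] field_simps)
  ultimately show ?thesis
    using u0 pderiv_root_poly_Z[OF r] by (simp add: sum prod R'' a'' field_simps)
qed

text \<open>The magnification sum vanishes when the critical points are as many as deg R:
  then T has deg T = card Y distinct roots Y, deg g \<le> deg T - 2, and Euler--Jacobi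
  applies to the fibrewise sums.\<close>

theorem sum_zero:
  assumes deg_R: "degree R = card (crit_points F)"
    and deg_a': "degree (pderiv a) + 2 \<le> card (crit_points F)"
  shows "(\<Sum>p\<in>crit_points F. magnification F p) = 0"
proof -
  have "R \<noteq> 0" using deg_R deg_a' by auto
  then have "T \<noteq> 0" by (auto simp: factor_R)
  then have deg_T: "degree T = card Y"
    using deg_R card_crit by (simp add: factor_R degree_mult_eq root_poly_nonzero degree_root_poly finite_Z)
  have "degree g + 2 \<le> degree T" if "g \<noteq> 0"
    using that deg_a' deg_T card_crit
    by (simp add: factor_a' degree_mult_eq root_poly_nonzero degree_root_poly finite_Z)
  then have "g = 0 \<or> degree g + 2 \<le> degree T" by blast
  then have "(\<Sum>r\<in>Y. poly g r / poly (pderiv T) r) = 0"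
    using finite_Y deg_T T_root by (intro euler_jacobi_1d) auto
  moreover have "(\<Sum>p\<in>fibre r. magnification F p) = - (poly g r / poly (pderiv T) r)" if "r \<in> Y" for r
    using that regular_fibre_sum folded_fibre_sum by (cases "r \<in> Z") auto
  ultimately show ?thesis
    by (simp add: sum_over_fibres sum_negf)
qed

end

lemma degree_sum_monom_le:
  assumes "finite K" "\<forall>k\<in>K. k \<le> m"
  shows "degree (\<Sum>k\<in>K. monom (c k) k :: real poly) \<le> m"
  using assms by (intro degree_sum_le) (auto intro: order.trans[OF degree_monom_le])

lemma degree_monom_add:
  fixes q :: "real poly"
  assumes "e \<noteq> 0" "degree q < m"
  shows "degree (monom e m + q) = m"
  using assms by (simp add: degree_add_eq_left degree_monom_eq)

definition A_poly :: "nat \<Rightarrow> real \<Rightarrow> (nat \<Rightarrow> real) \<Rightarrow> real \<Rightarrow> real \<Rightarrow> real poly" where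
  "A_poly n e c s1 s2 =
     monom e (n + 1) + ((\<Sum>k = 3..n - 1. monom (c k) k) + monom s2 2 + monom (-s1) 1)"

lemma poly_A_poly:
  "poly (A_poly n e c s1 s2) x = e * x^(n + 1) + (\<Sum>k = 3..n - 1. c k * x^k) + s2 * x^2 - s1 * x"
  by (simp add: A_poly_def poly_sum poly_monom)

lemma degree_A_poly:
  assumes "e \<noteq> 0" "n \<ge> 2"
  shows "degree (A_poly n e c s1 s2) = n + 1"
proof -
  have "degree ((\<Sum>k = 3..n - 1. monom (c k) k) + monom s2 2 + monom (-s1) 1) \<le> n"
    using assms by (intro degree_add_le degree_sum_monom_le) (auto intro: order.trans[OF degree_monom_le])
  then show ?thesis
    using assms unfolding A_poly_def by (intro degree_monom_add) auto
qed

lemma A_family_sum_zero: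
  assumes "n \<ge> 2" "e1 \<in> {1, -1}" "e2 \<in> {1, -1}" and F: "F = A_family n e1 e2 e3 c s1 s2"
    and "finite (crit_points F)" "card (crit_points F) = n"
  shows "(\<Sum>p\<in>crit_points F. magnification F p) = 0"
proof (rule separable_form_sum_zero)
  show "F = (\<lambda>(x1, x2). poly (A_poly n e1 c s1 s2) x1 + e2 * x2^2 + e3 * s2 * x2)"
    unfolding F A_family_def poly_A_poly by (auto simp: fun_eq_iff)
  have "degree (pderiv (A_poly n e1 c s1 s2)) = n"
    using assms by (auto simp: degree_pderiv degree_A_poly)
  then show "degree (pderiv (A_poly n e1 c s1 s2)) \<ge> 2"
    and "card (crit_points F) = degree (pderiv (A_poly n e1 c s1 s2))"
    using assms by auto
qed (use assms in auto)

definition D_poly :: "nat \<Rightarrow> real \<Rightarrow> (nat \<Rightarrow> real) \<Rightarrow> real \<Rightarrow> real poly" where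
  "D_poly n e c s2 = monom e (n - 1) + ((\<Sum>k = 2..n - 2. monom (c k) k) + monom (-s2) 1)"

lemma poly_D_poly: "poly (D_poly n e c s2) x = e * x^(n - 1) + (\<Sum>k = 2..n - 2. c k * x^k) - s2 * x"
  by (simp add: D_poly_def poly_sum poly_monom)

lemma degree_D_poly:
  assumes "e \<noteq> 0" "n \<ge> 4"
  shows "degree (D_poly n e c s2) = n - 1"
proof -
  have "degree ((\<Sum>k = 2..n - 2. monom (c k) k) + monom (-s2) 1) \<le> n - 2"
    using assms by (intro degree_add_le degree_sum_monom_le) (auto intro: order.trans[OF degree_monom_le])
  then show ?thesis
    using assms unfolding D_poly_def by (intro degree_monom_add) auto
qed

lemma D_family_sum_zero:
  assumes "n \<ge> 4" "e \<in> {1, -1}" and F: "F = D_family n e c s1 s2"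
    and "finite (crit_points F)" "card (crit_points F) = n"
    and "\<forall>p\<in>crit_points F. hess_det F p \<noteq> 0"
  shows "(\<Sum>p\<in>crit_points F. magnification F p) = 0"
proof -
  interpret D_form "D_poly n e c s2" s1 F
    by unfold_locales (auto simp: F D_family_def poly_D_poly)
  have "degree (D_poly n e c s2) = n - 1"
    using assms by (intro degree_D_poly) auto
  then show ?thesis
    using assms by (intro sum_zero) auto
qed

lemma E6_family_sum_zero:
  assumes "e \<in> {1, -1}" and F: "F = E6_family e c s1 s2"
    and "finite (crit_points F)" "card (crit_points F) = 6"
    and "\<forall>p\<in>crit_points F. hess_det F p \<noteq> 0"
  shows "(\<Sum>p\<in>crit_points F. magnification F p) = 0"
proof -
  have "F = (\<lambda>(x1, x2). x1^3 + x1 * poly [:-s1, c 1, c 3:] x2 + poly [:0, -s2, c 2, 0, e:] x2)"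
    unfolding F E6_family_def by (auto simp: fun_eq_iff; algebra)
  then interpret E_form_nondegenerate "[:-s1, c 1, c 3:]" "[:0, -s2, c 2, 0, e:]" F
    using assms by unfold_locales auto
  have "degree R = 6"
    using assms unfolding R_def by (auto simp: pderiv_pCons)
  then show ?thesis
    using assms by (intro sum_zero) (auto simp: pderiv_pCons)
qed

lemma E7_family_sum_zero:
  assumes F: "F = E7_family c s1 s2"
    and "finite (crit_points F)" "card (crit_points F) = 7"
    and "\<forall>p\<in>crit_points F. hess_det F p \<noteq> 0"
  shows "(\<Sum>p\<in>crit_points F. magnification F p) = 0"
proof -
  have "F = (\<lambda>(x1, x2). x1^3 + x1 * poly [:-s1, c 1, 0, 1:] x2 + poly [:0, -s2, c 2, c 3, c 4:] x2)"
    unfolding F E7_family_def by (auto simp: fun_eq_iff; algebra)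
  then interpret E_form_nondegenerate "[:-s1, c 1, 0, 1:]" "[:0, -s2, c 2, c 3, c 4:]" F
    using assms by unfold_locales auto
  have "degree R = 7"
    using assms unfolding R_def by (auto simp: pderiv_pCons)
  then show ?thesis
    using assms by (intro sum_zero) (auto simp: pderiv_pCons)
qed

lemma E8_family_sum_zero:
  assumes F: "F = E8_family c s1 s2"
    and "finite (crit_points F)" "card (crit_points F) = 8"
    and "\<forall>p\<in>crit_points F. hess_det F p \<noteq> 0"
  shows "(\<Sum>p\<in>crit_points F. magnification F p) = 0"
proof -
  have "F = (\<lambda>(x1, x2). x1^3 + x1 * poly [:-s1, c 1, c 4, c 5:] x2 + poly [:0, -s2, c 2, c 3, 0, 1:] x2)"
    unfolding F E8_family_def by (auto simp: fun_eq_iff; algebra)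
  then interpret E_form_nondegenerate "[:-s1, c 1, c 4, c 5:]" "[:0, -s2, c 2, c 3, 0, 1:]" F
    using assms by unfold_locales auto
  have "degree R = 8"
    using assms unfolding R_def by (auto simp: pderiv_pCons)
  then show ?thesis
    using assms by (intro sum_zero) (auto simp: pderiv_pCons)
qed

theorem theorem9p1:
  fixes F :: "real \<times> real \<Rightarrow> real" and n :: nat
  assumes "ADE_family F n"
    and "finite (crit_points F)" and "card (crit_points F) = n"
    and "\<forall>p \<in> crit_points F. hess_det F p \<noteq> 0"
  shows "(\<Sum>p \<in> crit_points F. magnification F p) = 0"
  using assms(1) unfolding ADE_family_def
proof (elim disjE exE conjE)
  fix e1 e2 e3 c s1 s2
  assume "2 \<le> n" "e1 \<in> {1, -1}" "e2 \<in> {1, -1}" "F = A_family n e1 e2 e3 c s1 s2"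
  then show ?thesis using A_family_sum_zero assms(2,3) by blast
next
  fix e c s1 s2
  assume "4 \<le> n" "e \<in> {1, -1}" "F = D_family n e c s1 s2"
  then show ?thesis using D_family_sum_zero assms(2-4) by blast
next
  fix e c s1 s2
  assume "n = 6" "e \<in> {1, -1}" "F = E6_family e c s1 s2"
  then show ?thesis using E6_family_sum_zero assms(2-4) by blast
next
  fix c s1 s2
  assume "n = 7" "F = E7_family c s1 s2"
  then show ?thesis using E7_family_sum_zero assms(2-4) by blast
next
  fix c s1 s2
  assume "n = 8" "F = E8_family c s1 s2"
  then show ?thesis using E8_family_sum_zero assms(2-4) by blast
qed

end
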